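(* Let $d \geq 2$, $N, K \geq 1$ be integers, $\mathbf{y}_1,\ldots,\mathbf{y}_N \in \mathbb{R}^d$ with matrix $\mathbf{Y} = [\mathbf{y}_1,\ldots,\mathbf{y}_N]$, and $\rho_k^{[i]} \geq 0$ with $\sum_{k=1}^K \rho_k^{[i]} = 1$ for each $i$. Put $\mathbf{A}_k = \sum_{i} \rho_k^{[i]}\mathbf{y}_i\mathbf{y}_i^\mathrm{T}$, $\gamma_k = \sum_i \rho_k^{[i]}$, $\lambda_k = $ largest eigenvalue of $\mathbf{A}_k$. For $S \subseteq [K]$ define $\sigma^2(S) = \big(\|\mathbf{Y}\|_\mathrm{F}^2 - \sum_{k\in S}\lambda_k\big)/\big(dN - \sum_{k\in S}\gamma_k\big)$ and $g(S) = \big[dN - \sum_{k\in S}\gamma_k\big]\ln\sigma^2(S) + \sum_{k\in S}\gamma_k\ln(\lambda_k/\gamma_k)$, and assume $\gamma_k>0$, $\lambda_k>0$ for all $k$ and $\sigma^2(S)>0$ for all $S\subseteq[K]$. Let $\mathcal{V} = \{S \subseteq [K] : \sigma^2(S) \leq \lambda_k/\gamma_k \text{ for all } k\in S\}$. Consider the procedure: start with $S = \emptyset$; while the set $L = \{k \in [K]\setminus S : \sigma^2(S) \leq \lambda_k/\gamma_k\}$ is nonempty, choose any $k^\star \in L$ and replace $S$ by $S\cup\{k^\star\}$. Then this procedure terminates, every set $S$ it produces lies in $\mathcal{V}$, and its output is the unique saturated set (a set $S\in\mathcal{V}$ with $\sigma^2(S) > \lambda_j/\gamma_j$ for all $j \notin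 S$), which is a minimizer of $g$ over $\mathcal{V}$.
   Context: $[K] = \{1,\ldots,K\}$; $\|\cdot\|_\mathrm{F}$ is the Frobenius norm. *)

theory Defs
  imports "HOL-Analysis.Analysis"
begin

definition outer :: "real^'d \<Rightarrow> real^'d^'d" where
  "outer v = (\<chi> a b. v $ a * v $ b)"

definition is_eigenvalue :: "real^'n^'n \<Rightarrow> real \<Rightarrow> bool" where
  "is_eigenvalue A \<mu> \<longleftrightarrow> (\<exists>v. v \<noteq> 0 \<and> A *v v = \<mu> *\<^sub>R v)"

definition largest_eigenvalue :: "real^'n^'n \<Rightarrow> real" where
  "largest_eigenvalue A = Max {\<mu>. is_eigenvalue A \<mu>}"

definition Amat :: "(nat \<Rightarrow> real^'d) \<Rightarrow> (nat \<Rightarrow> nat \<Rightarrow> real) \<Rightarrow> nat \<Rightarrow> nat \<Rightarrow> real^'d^'d" where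
  "Amat y \<rho> N k = (\<Sum>i\<in>{1..N}. \<rho> k i *\<^sub>R outer (y i))"

definition gam :: "(nat \<Rightarrow> nat \<Rightarrow> real) \<Rightarrow> nat \<Rightarrow> nat \<Rightarrow> real" where
  "gam \<rho> N k = (\<Sum>i\<in>{1..N}. \<rho> k i)"

definition lam :: "(nat \<Rightarrow> real^'d) \<Rightarrow> (nat \<Rightarrow> nat \<Rightarrow> real) \<Rightarrow> nat \<Rightarrow> nat \<Rightarrow> real" where
  "lam y \<rho> N k = largest_eigenvalue (Amat y \<rho> N k)"

definition frob_sq :: "(nat \<Rightarrow> real^'d) \<Rightarrow> nat \<Rightarrow> real" where
  "frob_sq y N = (\<Sum>i\<in>{1..N}. \<Sum>j\<in>UNIV. (y i $ j)^2)"

definition sigma2 :: "(nat \<Rightarrow> real^'d) \<Rightarrow> (nat \<Rightarrow> nat \<Rightarrow> real) \<Rightarrow> nat \<Rightarrow> nat set \<Rightarrow> real" where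
  "sigma2 y \<rho> N S =
     (frob_sq y N - (\<Sum>k\<in>S. lam y \<rho> N k)) /
     (real CARD('d) * real N - (\<Sum>k\<in>S. gam \<rho> N k))"

definition gfun :: "(nat \<Rightarrow> real^'d) \<Rightarrow> (nat \<Rightarrow> nat \<Rightarrow> real) \<Rightarrow> nat \<Rightarrow> nat set \<Rightarrow> real" where
  "gfun y \<rho> N S =
     (real CARD('d) * real N - (\<Sum>k\<in>S. gam \<rho> N k)) * ln (sigma2 y \<rho> N S)
     + (\<Sum>k\<in>S. gam \<rho> N k * ln (lam y \<rho> N k / gam \<rho> N k))"

definition Vset :: "(nat \<Rightarrow> real^'d) \<Rightarrow> (nat \<Rightarrow> nat \<Rightarrow> real) \<Rightarrow> nat \<Rightarrow> nat \<Rightarrow> nat set set" where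
  "Vset y \<rho> N K = {S. S \<subseteq> {1..K} \<and>
      (\<forall>k\<in>S. sigma2 y \<rho> N S \<le> lam y \<rho> N k / gam \<rho> N k)}"

definition Lset :: "(nat \<Rightarrow> real^'d) \<Rightarrow> (nat \<Rightarrow> nat \<Rightarrow> real) \<Rightarrow> nat \<Rightarrow> nat \<Rightarrow> nat set \<Rightarrow> nat set" where
  "Lset y \<rho> N K S = {k \<in> {1..K} - S. sigma2 y \<rho> N S \<le> lam y \<rho> N k / gam \<rho> N k}"

definition proc_step :: "(nat \<Rightarrow> real^'d) \<Rightarrow> (nat \<Rightarrow> nat \<Rightarrow> real) \<Rightarrow> nat \<Rightarrow> nat \<Rightarrow> nat set \<Rightarrow> nat set \<Rightarrow> bool" where
  "proc_step y \<rho> N K S S' \<longleftrightarrow> (\<exists>k\<in>Lset y \<rho> N K S. S' = insert k S)"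

definition saturated :: "(nat \<Rightarrow> real^'d) \<Rightarrow> (nat \<Rightarrow> nat \<Rightarrow> real) \<Rightarrow> nat \<Rightarrow> nat \<Rightarrow> nat set \<Rightarrow> bool" where
  "saturated y \<rho> N K S \<longleftrightarrow> S \<in> Vset y \<rho> N K \<and>
     (\<forall>j\<in>{1..K} - S. sigma2 y \<rho> N S > lam y \<rho> N j / gam \<rho> N j)"

end

theory Submission
  imports Defs
begin

text \<open>
  Write sigma^2(S) = A/B. Adding a candidate k to S replaces A/B by (A - lambda_k)/(B - gamma_k),
  which is at most A/B exactly because A/B <= lambda_k/gamma_k. Hence sigma^2 decreases along the
  procedure, so every set it visits stays in V; it terminates because S grows strictly inside [K].

  The function G(s) = ||Y||^2 - s d N - sum_k gamma_k max(0, lambda_k/gamma_k - s) is strictly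
  decreasing (its slope is at most -dN + N < 0), vanishes at sigma^2 of a saturated set and is
  nonpositive at sigma^2 of any set in V. So a saturated set S has the smallest sigma^2 in V, and
  therefore contains every T in V; in particular it is unique.

  Finally g(S) + dN is the minimum over s > 0 of a negative log-likelihood in which each
  component k in S contributes a term that is nonpositive for every s (by ln x <= x - 1). Thus g
  is antitone with respect to inclusion, and S, containing all of V, minimises g on V.
\<close>

lemma ln_plus_recip_min:
  fixes a b s :: real
  assumes "a > 0" "b > 0" "s > 0"
  shows "a * ln (b / a) + a \<le> a * ln s + b / s"
proof -
  have "ln (b / (a * s)) \<le> b / (a * s) - 1"
    using assms by (intro ln_le_minus_one) auto
  also have "ln (b / (a * s)) = ln (b / a) - ln s"
    using assms by (simp add: ln_div ln_mult)
  finally have "a * (ln (b / a) - ln s) \<le> a * (b / (a * s) - 1)"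
    using assms(1) by (intro mult_left_mono) auto
  with assms show ?thesis by (simp add: algebra_simps)
qed

lemma mediant_diff_le:
  fixes a b c d :: real
  assumes "0 < d" "d < b" "a / b \<le> c / d"
  shows "(a - c) / (b - d) \<le> a / b"
proof -
  have "a * d \<le> c * b" using assms by (simp add: divide_simps)
  hence "(a - c) * b \<le> a * (b - d)" by (simp add: algebra_simps)
  with assms show ?thesis by (simp add: divide_simps)
qed

text \<open>
  The parameters gamma, mu, D, F stand for gamma_k, lambda_k, dN and ||Y||_F^2. The two bounds on
  sums over I are what d >= 2, sum_k gamma_k = N and sigma^2([K]) > 0 provide.
\<close>

locale saturation_problem =
  fixes I :: "'a set" and \<gamma> \<mu> :: "'a \<Rightarrow> real" and D F :: real
  assumes finite_I: "finite I"
    and gamma_pos: "k \<in> I \<Longrightarrow> \<gamma> k > 0"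
    and mu_pos: "k \<in> I \<Longrightarrow> \<mu> k > 0"
    and sum_gamma_less: "sum \<gamma> I < D"
    and sum_mu_less: "sum \<mu> I < F"
begin

definition ratio :: "'a \<Rightarrow> real" where
  "ratio k = \<mu> k / \<gamma> k"

definition sig2 :: "'a set \<Rightarrow> real" where
  "sig2 S = (F - sum \<mu> S) / (D - sum \<gamma> S)"

definition objective :: "'a set \<Rightarrow> real" where
  "objective S = (D - sum \<gamma> S) * ln (sig2 S) + (\<Sum>k\<in>S. \<gamma> k * ln (ratio k))"

definition feasible :: "'a set set" where
  "feasible = {S. S \<subseteq> I \<and> (\<forall>k\<in>S. sig2 S \<le> ratio k)}"

definition candidates :: "'a set \<Rightarrow> 'a set" where
  "candidates S = {k \<in> I - S. sig2 S \<le> ratio k}"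

definition greedy_step :: "'a set \<Rightarrow> 'a set \<Rightarrow> bool" where
  "greedy_step S S' \<longleftrightarrow> (\<exists>k\<in>candidates S. S' = insert k S)"

definition is_saturated :: "'a set \<Rightarrow> bool" where
  "is_saturated S \<longleftrightarrow> S \<in> feasible \<and> (\<forall>j\<in>I - S. ratio j < sig2 S)"

lemma gamma_nonneg: "k \<in> I \<Longrightarrow> \<gamma> k \<ge> 0"
  using gamma_pos[of k] by simp

lemma gamma_mult_ratio: "k \<in> I \<Longrightarrow> \<gamma> k * ratio k = \<mu> k"
  using gamma_pos[of k] unfolding ratio_def by simp

lemma sum_gamma_less_subset: "S \<subseteq> I \<Longrightarrow> sum \<gamma> S < D"
  using sum_mono2[OF finite_I, of S \<gamma>] gamma_nonneg sum_gamma_less by fastforce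

lemma sum_mu_less_subset: "S \<subseteq> I \<Longrightarrow> sum \<mu> S < F"
  using sum_mono2[OF finite_I, of S \<mu>] mu_pos sum_mu_less
  by (fastforce intro: less_imp_le)

lemma sig2_pos: "S \<subseteq> I \<Longrightarrow> sig2 S > 0"
  unfolding sig2_def using sum_gamma_less_subset sum_mu_less_subset by simp

lemma sig2_mult: "S \<subseteq> I \<Longrightarrow> sig2 S * (D - sum \<gamma> S) = F - sum \<mu> S"
  unfolding sig2_def using sum_gamma_less_subset[of S] by simp

lemma sig2_insert_le:
  assumes S: "S \<subseteq> I" and k: "k \<in> I - S" and le: "sig2 S \<le> ratio k"
  shows "sig2 (insert k S) \<le> sig2 S"
proof -
  have "finite S" using S finite_I finite_subset by blast
  hence "sig2 (insert k S) = ((F - sum \<mu> S) - \<mu> k) / ((D - sum \<gamma> S) - \<gamma> k)"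
    using k unfolding sig2_def by (simp add: algebra_simps)
  also have "\<dots> \<le> sig2 S"
    unfolding sig2_def
  proof (rule mediant_diff_le)
    show "0 < \<gamma> k" using k gamma_pos by blast
    show "\<gamma> k < D - sum \<gamma> S"
      using sum_gamma_less_subset[of "insert k S"] S k \<open>finite S\<close> by auto
    show "(F - sum \<mu> S) / (D - sum \<gamma> S) \<le> \<mu> k / \<gamma> k"
      using le unfolding sig2_def ratio_def .
  qed
  finally show ?thesis .
qed

lemma feasible_insert:
  assumes "S \<in> feasible" "k \<in> candidates S"
  shows "insert k S \<in> feasible"
proof -
  have S: "S \<subseteq> I" and k: "k \<in> I - S" and le: "sig2 S \<le> ratio k"
    using assms unfolding feasible_def candidates_def by auto
  have "sig2 (insert k S) \<le> sig2 S" by (rule sig2_insert_le[OF S k le])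
  with assms(1) le show ?thesis
    unfolding feasible_def using k by (auto intro: order_trans)
qed

lemma greedy_reachable_feasible: "greedy_step\<^sup>*\<^sup>* {} S \<Longrightarrow> S \<in> feasible"
proof (induction rule: rtranclp_induct)
  case base
  then show ?case unfolding feasible_def by simp
next
  case (step S S')
  then show ?case unfolding greedy_step_def by (auto intro: feasible_insert)
qed

lemma greedy_no_infinite_run: "\<not> (\<exists>f. f 0 = {} \<and> (\<forall>n. greedy_step (f n) (f (Suc n))))"
proof
  assume "\<exists>f. f 0 = {} \<and> (\<forall>n. greedy_step (f n) (f (Suc n)))"
  then obtain f where f0: "f 0 = {}" and step: "\<And>n. greedy_step (f n) (f (Suc n))" by blast
  have run: "f n \<subseteq> I \<and> card (f n) = n" for n
  proof (induction n)
    case 0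
    then show ?case using f0 by simp
  next
    case (Suc n)
    obtain k where "k \<in> I - f n" and "f (Suc n) = insert k (f n)"
      using step[of n] unfolding greedy_step_def candidates_def by auto
    moreover have "finite (f n)" using Suc.IH finite_I finite_subset by blast
    ultimately show ?case using Suc.IH by simp
  qed
  have "card (f (Suc (card I))) \<le> card I"
    using run finite_I by (intro card_mono) auto
  with run show False by (metis Suc_n_not_le_n)
qed

lemma greedy_final_saturated:
  assumes "greedy_step\<^sup>*\<^sup>* {} S" "candidates S = {}"
  shows "is_saturated S"
  using greedy_reachable_feasible[OF assms(1)] assms(2)
  unfolding is_saturated_def candidates_def by (auto simp: not_le)

definition balance :: "real \<Rightarrow> real" where
  "balance s = F - s * D - (\<Sum>k\<in>I. \<gamma> k * max 0 (ratio k - s))"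

lemma balance_strict_antimono:
  assumes "s < t"
  shows "balance t < balance s"
proof -
  have "(\<Sum>k\<in>I. \<gamma> k * max 0 (ratio k - s)) \<le> (\<Sum>k\<in>I. \<gamma> k * (max 0 (ratio k - t) + (t - s)))"
    using assms gamma_nonneg by (intro sum_mono mult_left_mono) auto
  also have "\<dots> = (\<Sum>k\<in>I. \<gamma> k * max 0 (ratio k - t)) + sum \<gamma> I * (t - s)"
    by (simp add: distrib_left sum.distrib sum_distrib_right)
  also have "sum \<gamma> I * (t - s) < D * (t - s)"
    using sum_gamma_less assms by (intro mult_strict_right_mono) auto
  finally show ?thesis unfolding balance_def by (simp add: algebra_simps)
qed

lemma sig2_balanced:
  assumes S: "S \<subseteq> I"
  shows "F - sig2 S * D - (\<Sum>k\<in>S. \<gamma> k * (ratio k - sig2 S)) = 0"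
proof -
  have "(\<Sum>k\<in>S. \<gamma> k * (ratio k - sig2 S)) = (\<Sum>k\<in>S. \<mu> k - sig2 S * \<gamma> k)"
    using S by (intro sum.cong) (auto simp: algebra_simps gamma_mult_ratio)
  then show ?thesis
    using sig2_mult[OF S] by (simp add: sum_subtractf sum_distrib_right algebra_simps)
qed

lemma balance_feasible_nonpos:
  assumes "T \<in> feasible"
  shows "balance (sig2 T) \<le> 0"
proof -
  have T: "T \<subseteq> I" and le: "\<And>k. k \<in> T \<Longrightarrow> sig2 T \<le> ratio k"
    using assms unfolding feasible_def by auto
  have "(\<Sum>k\<in>T. \<gamma> k * (ratio k - sig2 T)) = (\<Sum>k\<in>T. \<gamma> k * max 0 (ratio k - sig2 T))"
    using le by (intro sum.cong) auto
  also have "\<dots> \<le> (\<Sum>k\<in>I. \<gamma> k * max 0 (ratio k - sig2 T))"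
    using T finite_I gamma_nonneg by (intro sum_mono2) auto
  finally show ?thesis using sig2_balanced[OF T] unfolding balance_def by linarith
qed

lemma balance_saturated:
  assumes "is_saturated S"
  shows "balance (sig2 S) = 0"
proof -
  have S: "S \<subseteq> I" and le: "\<And>k. k \<in> S \<Longrightarrow> sig2 S \<le> ratio k"
    and gt: "\<And>j. j \<in> I - S \<Longrightarrow> ratio j < sig2 S"
    using assms unfolding is_saturated_def feasible_def by auto
  have "(\<Sum>k\<in>I. \<gamma> k * max 0 (ratio k - sig2 S)) = (\<Sum>k\<in>S. \<gamma> k * max 0 (ratio k - sig2 S))"
    using S finite_I gt by (intro sum.mono_neutral_right) fastforce+
  also have "\<dots> = (\<Sum>k\<in>S. \<gamma> k * (ratio k - sig2 S))"
    using le by (intro sum.cong) auto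
  finally show ?thesis using sig2_balanced[OF S] unfolding balance_def by linarith
qed

lemma feasible_subset_saturated:
  assumes S: "is_saturated S" and T: "T \<in> feasible"
  shows "T \<subseteq> S"
proof
  fix k assume "k \<in> T"
  have "\<not> sig2 T < sig2 S"
    using balance_strict_antimono[of "sig2 T" "sig2 S"] balance_saturated[OF S]
      balance_feasible_nonpos[OF T] by linarith
  moreover have "k \<in> I" "sig2 T \<le> ratio k"
    using \<open>k \<in> T\<close> T unfolding feasible_def by auto
  ultimately show "k \<in> S" using S unfolding is_saturated_def by force
qed

lemma saturated_unique: "is_saturated S \<Longrightarrow> is_saturated T \<Longrightarrow> T = S"
  using feasible_subset_saturated unfolding is_saturated_def by blast

definition neg_log_lik :: "'a set \<Rightarrow> real \<Rightarrow> real" where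
  "neg_log_lik S s = D * ln s + F / s
     + (\<Sum>k\<in>S. \<gamma> k * ln (ratio k) + \<gamma> k - (\<gamma> k * ln s + \<mu> k / s))"

lemma neg_log_lik_eq:
  "neg_log_lik S s = (D - sum \<gamma> S) * ln s + (F - sum \<mu> S) / s
     + (\<Sum>k\<in>S. \<gamma> k * ln (ratio k)) + sum \<gamma> S"
proof -
  have "(\<Sum>k\<in>S. \<gamma> k * ln (ratio k) + \<gamma> k - (\<gamma> k * ln s + \<mu> k / s))
      = (\<Sum>k\<in>S. \<gamma> k * ln (ratio k)) + sum \<gamma> S - (sum \<gamma> S * ln s + sum \<mu> S / s)"
    by (simp add: sum.distrib sum_subtractf sum_distrib_right sum_divide_distrib)
  then show ?thesis unfolding neg_log_lik_def by (simp add: algebra_simps diff_divide_distrib)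
qed

lemma neg_log_lik_sig2: "S \<subseteq> I \<Longrightarrow> neg_log_lik S (sig2 S) = objective S + D"
  using sig2_mult[of S] sig2_pos[of S] unfolding neg_log_lik_eq objective_def
  by (simp add: field_simps)

lemma neg_log_lik_sig2_le:
  assumes S: "S \<subseteq> I" and s: "s > 0"
  shows "neg_log_lik S (sig2 S) \<le> neg_log_lik S s"
proof -
  define a b where "a = D - sum \<gamma> S" and "b = F - sum \<mu> S"
  have a: "a > 0" and b: "b > 0"
    using sum_gamma_less_subset[OF S] sum_mu_less_subset[OF S] by (simp_all add: a_def b_def)
  have "sig2 S = b / a" unfolding sig2_def a_def b_def ..
  with a b have "neg_log_lik S (sig2 S) - neg_log_lik S s
      = (a * ln (b / a) + a) - (a * ln s + b / s)"
    unfolding neg_log_lik_eq a_def[symmetric] b_def[symmetric] by simp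
  with ln_plus_recip_min[OF a b s] show ?thesis by linarith
qed

lemma neg_log_lik_antimono:
  assumes "S \<subseteq> S'" "S' \<subseteq> I" "s > 0"
  shows "neg_log_lik S' s \<le> neg_log_lik S s"
proof -
  let ?c = "\<lambda>k. \<gamma> k * ln (ratio k) + \<gamma> k - (\<gamma> k * ln s + \<mu> k / s)"
  have "?c k \<le> 0" if "k \<in> I" for k
    using ln_plus_recip_min[of "\<gamma> k" "\<mu> k" s] gamma_pos[OF that] mu_pos[OF that] assms(3)
    unfolding ratio_def by simp
  hence "sum ?c (S' - S) \<le> 0" using assms(2) by (intro sum_nonpos) auto
  moreover have "sum ?c S' = sum ?c (S' - S) + sum ?c S"
    using finite_subset[OF assms(2) finite_I] by (rule sum.subset_diff[OF assms(1)])
  ultimately have "sum ?c S' \<le> sum ?c S" by linarith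
  then show ?thesis unfolding neg_log_lik_def by linarith
qed

lemma objective_antimono:
  assumes "S \<subseteq> S'" "S' \<subseteq> I"
  shows "objective S' \<le> objective S"
proof -
  have S: "S \<subseteq> I" using assms by blast
  have "objective S' + D = neg_log_lik S' (sig2 S')"
    using neg_log_lik_sig2[OF assms(2)] by simp
  also have "\<dots> \<le> neg_log_lik S' (sig2 S)"
    by (rule neg_log_lik_sig2_le[OF assms(2) sig2_pos[OF S]])
  also have "\<dots> \<le> neg_log_lik S (sig2 S)"
    by (rule neg_log_lik_antimono[OF assms sig2_pos[OF S]])
  also have "\<dots> = objective S + D" by (rule neg_log_lik_sig2[OF S])
  finally show ?thesis by linarith
qed

lemma saturated_minimizes_objective:
  assumes "is_saturated S" "T \<in> feasible"
  shows "objective S \<le> objective T"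
proof (rule objective_antimono)
  show "T \<subseteq> S" by (rule feasible_subset_saturated[OF assms])
  show "S \<subseteq> I" using assms(1) unfolding is_saturated_def feasible_def by blast
qed

end

lemma sum_gam_eq:
  assumes "\<And>i. i \<in> {1..N} \<Longrightarrow> (\<Sum>k\<in>{1..K}. \<rho> k i) = 1"
  shows "(\<Sum>k\<in>{1..K}. gam \<rho> N k) = real N"
proof -
  have "(\<Sum>k\<in>{1..K}. gam \<rho> N k) = (\<Sum>i\<in>{1..N}. \<Sum>k\<in>{1..K}. \<rho> k i)"
    unfolding gam_def by (rule sum.swap)
  also have "\<dots> = real N" using assms by simp
  finally show ?thesis .
qed

theorem mainTheorem6:
  fixes y :: "nat \<Rightarrow> real^'d" and \<rho> :: "nat \<Rightarrow> nat \<Rightarrow> real" and N K :: nat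
  assumes d2: "CARD('d) \<ge> 2" and N1: "N \<ge> 1" and K1: "K \<ge> 1"
    and rho_nonneg: "\<And>k i. k \<in> {1..K} \<Longrightarrow> i \<in> {1..N} \<Longrightarrow> \<rho> k i \<ge> 0"
    and rho_sum: "\<And>i. i \<in> {1..N} \<Longrightarrow> (\<Sum>k\<in>{1..K}. \<rho> k i) = 1"
    and gam_pos: "\<And>k. k \<in> {1..K} \<Longrightarrow> gam \<rho> N k > 0"
    and lam_pos: "\<And>k. k \<in> {1..K} \<Longrightarrow> lam y \<rho> N k > 0"
    and sigma_pos: "\<And>S. S \<subseteq> {1..K} \<Longrightarrow> sigma2 y \<rho> N S > 0"
  shows "\<not> (\<exists>f. f 0 = {} \<and> (\<forall>n. proc_step y \<rho> N K (f n) (f (Suc n))))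
    \<and> (\<forall>S. (proc_step y \<rho> N K)\<^sup>*\<^sup>* {} S \<longrightarrow> S \<in> Vset y \<rho> N K)
    \<and> (\<forall>S. (proc_step y \<rho> N K)\<^sup>*\<^sup>* {} S \<and> Lset y \<rho> N K S = {} \<longrightarrow>
           saturated y \<rho> N K S
           \<and> (\<forall>T. saturated y \<rho> N K T \<longrightarrow> T = S)
           \<and> (\<forall>T\<in>Vset y \<rho> N K. gfun y \<rho> N S \<le> gfun y \<rho> N T))"
proof -
  have gam_less: "(\<Sum>k\<in>{1..K}. gam \<rho> N k) < real CARD('d) * real N"
    using sum_gam_eq[OF rho_sum] d2 N1 by (simp add: less_le_trans[OF _ mult_right_mono])
  interpret P: saturation_problem "{1..K}" "gam \<rho> N" "lam y \<rho> N" "real CARD('d) * real N" "frob_sq y N"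
  proof
    show "sum (lam y \<rho> N) {1..K} < frob_sq y N"
      using sigma_pos[of "{1..K}"] gam_less by (simp add: sigma2_def zero_less_divide_iff)
  qed (use gam_pos lam_pos gam_less in auto)
  have sigma2_eq: "sigma2 y \<rho> N = P.sig2" and ratio_eq: "\<And>k. lam y \<rho> N k / gam \<rho> N k = P.ratio k"
    by (simp_all add: fun_eq_iff sigma2_def P.sig2_def P.ratio_def)
  have "Vset y \<rho> N K = P.feasible" "Lset y \<rho> N K = P.candidates"
    "proc_step y \<rho> N K = P.greedy_step" "saturated y \<rho> N K = P.is_saturated"
    "gfun y \<rho> N = P.objective"
    unfolding P.feasible_def P.candidates_def P.greedy_step_def P.is_saturated_def P.objective_def
    by (simp_all add: fun_eq_iff sigma2_eq ratio_eq Vset_def Lset_def proc_step_def saturated_def gfun_def)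
  then show ?thesis
    using P.greedy_no_infinite_run P.greedy_reachable_feasible P.greedy_final_saturated
      P.saturated_unique P.saturated_minimizes_objective by simp
qed

end
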